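(* Assume (A1)–(A3). Then for each $i=1,2$, $V_{R^i}>0$ on $\mathcal I$ and $R^i>0$ on $(\alpha,x_{R^i}]$.
   Context: $\mathcal I=(\alpha,\beta)$ with $-\infty\le\alpha<\beta\le\infty$; $b,\sigma$ continuous on $\mathcal I$, $\sigma>0$; $X$ is the coordinate process on the canonical space of continuous paths, with $\mathbf P_x$ the law of the (unique in law) weak solution of $\mathrm dX_t=b(X_t)\mathrm dt+\sigma(X_t)\mathrm dW_t$, $X_0=x$, whose endpoints are natural. $\mathcal T$ is the set of stopping times of the usual augmentation of the natural filtration of $X$. Fix $r>0$, $\mathcal Lu=bu'+\tfrac12\sigma^2u''$. Convention $f(X_\tau)=0$ on $\{\tau=\infty\}$. $R^i\in C^2(\mathcal I)$ satisfies (A1) $\mathbf E_x[\sup_{t\ge0}e^{-rt}|R^i(X_t)|]<\infty$ for each $x$; (A2) $e^{-rt}R^i(X_t)\to0$ $\mathbf P_x$-a.s. for each $x$; (A3) there is $x^i_0\in\mathcal I$ with $\mathcal LR^i-rR^i<0$ on $(\alpha,x^i_0)$ and $>0$ on $(x^i_0,\beta)$. $V_{R^i}(x)=\sup_{\tau\in\mathcal T}\mathbf E_x[e^{-r\tau}R^i(X_\tau)]$, and $x_{R^i}<x^i_0$ is the threshold such that $\{x:V_{R^i}(x)=R^i(x)\}=(\alpha,x_{R^i}]$. *)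

theory Defs
  imports "HOL-Probability.Probability"
begin

definition open_ivl :: "ereal \<Rightarrow> ereal \<Rightarrow> real set" where
  "open_ivl \<alpha> \<beta> = {x. \<alpha> < ereal x \<and> ereal x < \<beta>}"

(* Canonical space of continuous I-valued paths on [0,oo); a path is normalised
   to be constant on (-oo,0] so that paths are determined by their restriction to [0,oo). *)
definition paths :: "ereal \<Rightarrow> ereal \<Rightarrow> (real \<Rightarrow> real) set" where
  "paths \<alpha> \<beta> = {\<omega>. continuous_on UNIV \<omega> \<and> (\<forall>t\<le>0. \<omega> t = \<omega> 0) \<and> (\<forall>t. \<omega> t \<in> open_ivl \<alpha> \<beta>)}"

definition nat_filt :: "(real \<Rightarrow> real) set \<Rightarrow> real \<Rightarrow> (real \<Rightarrow> real) measure" where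
  "nat_filt \<Omega> t = sigma \<Omega> {{\<omega>\<in>\<Omega>. \<omega> s \<in> B} | s B. 0 \<le> s \<and> s \<le> t \<and> B \<in> sets borel}"

definition canon :: "(real \<Rightarrow> real) set \<Rightarrow> (real \<Rightarrow> real) measure" where
  "canon \<Omega> = sigma \<Omega> {{\<omega>\<in>\<Omega>. \<omega> s \<in> B} | s B. 0 \<le> s \<and> B \<in> sets borel}"

(* Usual augmentation of the natural filtration (right-continuous F_{t+} augmented by
   the P_x-null sets), taken simultaneously for all starting points x in I. *)
definition aug_sets :: "(real \<Rightarrow> real) set \<Rightarrow> (real \<Rightarrow> (real \<Rightarrow> real) measure) \<Rightarrow> real set
                         \<Rightarrow> real \<Rightarrow> (real \<Rightarrow> real) set set" where
  "aug_sets \<Omega> P I t = {A. A \<subseteq> \<Omega> \<and> (\<forall>x\<in>I. \<exists>B N. (\<forall>u>t. B \<in> sets (nat_filt \<Omega> u))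
        \<and> N \<in> sets (canon \<Omega>) \<and> emeasure (P x) N = 0 \<and> (A - B) \<union> (B - A) \<subseteq> N)}"

definition stop_times :: "(real \<Rightarrow> real) set \<Rightarrow> (real \<Rightarrow> (real \<Rightarrow> real) measure) \<Rightarrow> real set
                         \<Rightarrow> ((real \<Rightarrow> real) \<Rightarrow> ennreal) set" where
  "stop_times \<Omega> P I = {\<tau>. \<forall>t\<ge>0. {\<omega>\<in>\<Omega>. \<tau> \<omega> \<le> ennreal t} \<in> aug_sets \<Omega> P I t}"

definition disc_payoff :: "real \<Rightarrow> (real \<Rightarrow> real) \<Rightarrow> ((real \<Rightarrow> real) \<Rightarrow> ennreal) \<Rightarrow> (real \<Rightarrow> real) \<Rightarrow> real" where
  "disc_payoff r R \<tau> \<omega> = (if \<tau> \<omega> = \<infinity> then 0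
      else exp (- r * enn2real (\<tau> \<omega>)) * R (\<omega> (enn2real (\<tau> \<omega>))))"

definition value_fn :: "ereal \<Rightarrow> ereal \<Rightarrow> (real \<Rightarrow> (real \<Rightarrow> real) measure) \<Rightarrow> real \<Rightarrow> (real \<Rightarrow> real) \<Rightarrow> real \<Rightarrow> real" where
  "value_fn \<alpha> \<beta> P r R x = (SUP \<tau> \<in> stop_times (paths \<alpha> \<beta>) P (open_ivl \<alpha> \<beta>).
      integral\<^sup>L (completion (P x)) (disc_payoff r R \<tau>))"

definition gen :: "(real \<Rightarrow> real) \<Rightarrow> (real \<Rightarrow> real) \<Rightarrow> (real \<Rightarrow> real) \<Rightarrow> real \<Rightarrow> real" where
  "gen b \<sigma> u y = b y * deriv u y + 1/2 * (\<sigma> y)\<^sup>2 * deriv (deriv u) y"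

definition C2_on :: "real set \<Rightarrow> (real \<Rightarrow> real) \<Rightarrow> bool" where
  "C2_on S u \<longleftrightarrow> (\<exists>u' u''. (\<forall>y\<in>S. (u has_real_derivative u' y) (at y)
       \<and> (u' has_real_derivative u'' y) (at y)) \<and> continuous_on S u'')"

definition test_fun :: "real set \<Rightarrow> (real \<Rightarrow> real) \<Rightarrow> bool" where
  "test_fun I f \<longleftrightarrow> C2_on UNIV f \<and> (\<exists>a c. a \<in> I \<and> c \<in> I \<and> (\<forall>y. y \<notin> {a..c} \<longrightarrow> f y = 0))"

(* Q is (the law of) a weak solution of dX = b(X)dt + sigma(X)dW, X_0 = x, on the canonical
   space, expressed through the (equivalent, Stroock-Varadhan) martingale problem. *)
definition solves_MP :: "ereal \<Rightarrow> ereal \<Rightarrow> (real \<Rightarrow> real) \<Rightarrow> (real \<Rightarrow> real) \<Rightarrow> real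
                          \<Rightarrow> (real \<Rightarrow> real) measure \<Rightarrow> bool" where
  "solves_MP \<alpha> \<beta> b \<sigma> x Q \<longleftrightarrow> prob_space Q \<and> sets Q = sets (canon (paths \<alpha> \<beta>))
     \<and> (AE \<omega> in Q. \<omega> 0 = x)
     \<and> (\<forall>f. test_fun (open_ivl \<alpha> \<beta>) f \<longrightarrow>
          (let M = (\<lambda>t \<omega>. f (\<omega> t) - f (\<omega> 0) - integral {0..t} (\<lambda>s. gen b \<sigma> f (\<omega> s))) in
           \<forall>t\<ge>0. integrable Q (M t) \<and> M t \<in> borel_measurable (nat_filt (paths \<alpha> \<beta>) t)
             \<and> (\<forall>s A. 0 \<le> s \<longrightarrow> s \<le> t \<longrightarrow> A \<in> sets (nat_filt (paths \<alpha> \<beta>) s) \<longrightarrow>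
                  (\<integral>\<omega>\<in>A. M t \<omega> \<partial>Q) = (\<integral>\<omega>\<in>A. M s \<omega> \<partial>Q))))"

definition scale_dens :: "(real \<Rightarrow> real) \<Rightarrow> (real \<Rightarrow> real) \<Rightarrow> real \<Rightarrow> real \<Rightarrow> real" where
  "scale_dens b \<sigma> c y = exp (- (LBINT z=ereal c..ereal y. 2 * b z / (\<sigma> z)\<^sup>2))"

definition speed_dens :: "(real \<Rightarrow> real) \<Rightarrow> (real \<Rightarrow> real) \<Rightarrow> real \<Rightarrow> real \<Rightarrow> real" where
  "speed_dens b \<sigma> c y = 2 / ((\<sigma> y)\<^sup>2 * scale_dens b \<sigma> c y)"

(* Feller's test: both endpoints natural, i.e. Sigma = oo and N = oo at alpha and at beta *)
definition natural_endpoints :: "ereal \<Rightarrow> ereal \<Rightarrow> (real \<Rightarrow> real) \<Rightarrow> (real \<Rightarrow> real) \<Rightarrow> bool" where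
  "natural_endpoints \<alpha> \<beta> b \<sigma> \<longleftrightarrow> (\<exists>c. \<alpha> < ereal c \<and> ereal c < \<beta> \<and>
     (let s = scale_dens b \<sigma> c; m = speed_dens b \<sigma> c in
      (\<integral>\<^sup>+ \<eta>. indicator {\<eta>. c < \<eta> \<and> ereal \<eta> < \<beta>} \<eta> * ennreal (s \<eta> * (LBINT \<xi>=ereal c..ereal \<eta>. m \<xi>)) \<partial>lborel) = \<infinity>
    \<and> (\<integral>\<^sup>+ \<eta>. indicator {\<eta>. c < \<eta> \<and> ereal \<eta> < \<beta>} \<eta> * ennreal (m \<eta> * (LBINT \<xi>=ereal c..ereal \<eta>. s \<xi>)) \<partial>lborel) = \<infinity>
    \<and> (\<integral>\<^sup>+ \<eta>. indicator {\<eta>. \<alpha> < ereal \<eta> \<and> \<eta> < c} \<eta> * ennreal (s \<eta> * (LBINT \<xi>=ereal \<eta>..ereal c. m \<xi>)) \<partial>lborel) = \<infinity>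
    \<and> (\<integral>\<^sup>+ \<eta>. indicator {\<eta>. \<alpha> < ereal \<eta> \<and> \<eta> < c} \<eta> * ennreal (m \<eta> * (LBINT \<xi>=ereal \<eta>..ereal c. s \<xi>)) \<partial>lborel) = \<infinity>))"

end

theory Submission
  imports Defs
begin

(* Since never stopping is admissible, V_R >= 0, and V_R = R on (alpha, x_R]; so it suffices to show
   V_R > 0 on all of I.  If R <= 0 everywhere, then V_R = 0, hence R vanishes on (alpha, x_R], which
   contradicts (L - r) R < 0 there by (A3).  So R > eps on some [c, d], and stopping at a fixed time t
   on the event {X_t in (c, d)} earns a positive reward as soon as that event has positive probability.
   It does for some t by the martingale problem alone: otherwise almost every path avoids (c, d)
   forever, and a test function f (a high power of the distance to an anchor point beyond the starting
   point x, cut off smoothly inside (c, d)) satisfies 0 <= f <= L f along the paths, so Dynkin's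
   formula forces E f(X_t) >= (1 + t) f(x), contradicting the boundedness of f. *)

section \<open>Smooth cut-off functions\<close>

definition pospow :: "nat \<Rightarrow> real \<Rightarrow> real" where
  "pospow n z = (max 0 z) ^ n"

lemma pospow_nonneg: "0 \<le> pospow n z"
  by (simp add: pospow_def)

lemma pospow_pos: "0 < z \<Longrightarrow> pospow n z = z ^ n"
  by (simp add: pospow_def)

lemma pospow_nonpos: "z \<le> 0 \<Longrightarrow> 0 < n \<Longrightarrow> pospow n z = 0"
  by (simp add: pospow_def max_def)

lemma continuous_on_pospow [continuous_intros]:
  "continuous_on S f \<Longrightarrow> continuous_on S (\<lambda>x. pospow n (f x))"
  unfolding pospow_def by (intro continuous_intros)

lemma has_real_derivative_pospow:
  assumes "2 \<le> n"
  shows "(pospow n has_real_derivative real n * pospow (n - 1) z) (at z)"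
proof -
  consider "0 < z" | "z < 0" | "z = 0" by linarith
  then show ?thesis
  proof cases
    case 1
    have "((\<lambda>y. y ^ n) has_real_derivative real n * z ^ (n - 1)) (at z)"
      by (rule derivative_eq_intros refl)+ simp
    then have "(pospow n has_real_derivative real n * z ^ (n - 1)) (at z)"
      by (rule has_field_derivative_transform_within_open[where S = "{0<..}"])
        (use 1 in \<open>auto simp: pospow_pos\<close>)
    with 1 show ?thesis by (simp add: pospow_pos)
  next
    case 2
    have "(pospow n has_real_derivative 0) (at z)"
      by (rule has_field_derivative_transform_within_open[where S = "{..<0}", OF DERIV_const])
        (use 2 assms in \<open>auto simp: pospow_nonpos\<close>)
    with 2 assms show ?thesis by (simp add: pospow_nonpos)
  next
    case 3
    \<comment> \<open>At the kink, \<open>pospow n y = pospow (n - 1) y * y\<close> with a continuous factor vanishing at 0.\<close>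
    have "pospow n y - pospow n 0 = pospow (n - 1) y * y" for y
      using assms by (cases "0 < y") (auto simp: pospow_pos pospow_nonpos power_eq_if)
    moreover have "isCont (pospow (n - 1)) 0"
      using continuous_on_pospow[OF continuous_on_id, of UNIV "n - 1"]
      by (simp add: continuous_on_eq_continuous_at)
    ultimately have "(pospow n has_real_derivative pospow (n - 1) 0) (at 0)"
      by (auto simp: CARAT_DERIV)
    with 3 assms show ?thesis by (simp add: pospow_nonpos)
  qed
qed

lemma pospow_has_real_derivative [derivative_intros]:
  "2 \<le> n \<Longrightarrow> (f has_real_derivative f') (at x within S) \<Longrightarrow>
    ((\<lambda>x. pospow n (f x)) has_real_derivative real n * pospow (n - 1) (f x) * f') (at x within S)"
  using DERIV_chain2[OF has_real_derivative_pospow] by simp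

text \<open>The quintic smoothstep \<open>10u\<^sup>3 - 15u\<^sup>4 + 6u\<^sup>5\<close> on \<open>[0, 1]\<close>, extended by \<open>0\<close> and \<open>1\<close>;
  the correction term \<open>(u - 1)\<^sup>3 (6u\<^sup>2 + 3u + 1)\<close> switches on at \<open>u = 1\<close> and cancels the polynomial
  there, so the result is \<open>C\<^sup>2\<close> on all of \<open>\<real>\<close>.\<close>

definition smoothstep :: "real \<Rightarrow> real" where
  "smoothstep u = pospow 3 u * (10 - 15*u + 6*u^2) - pospow 3 (u - 1) * (6*u^2 + 3*u + 1)"

definition smoothstep' :: "real \<Rightarrow> real" where
  "smoothstep' u = 3 * pospow 2 u * (10 - 15*u + 6*u^2) + pospow 3 u * (12*u - 15)
        - (3 * pospow 2 (u - 1) * (6*u^2 + 3*u + 1) + pospow 3 (u - 1) * (12*u + 3))"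

definition smoothstep'' :: "real \<Rightarrow> real" where
  "smoothstep'' u = 6 * pospow 1 u * (10 - 15*u + 6*u^2) + 6 * pospow 2 u * (12*u - 15) + 12 * pospow 3 u
        - (6 * pospow 1 (u - 1) * (6*u^2 + 3*u + 1) + 6 * pospow 2 (u - 1) * (12*u + 3)
           + 12 * pospow 3 (u - 1))"

lemma has_real_derivative_smoothstep: "(smoothstep has_real_derivative smoothstep' u) (at u)"
  unfolding smoothstep_def [abs_def] smoothstep'_def
  by (rule derivative_eq_intros refl | simp add: algebra_simps)+

lemma has_real_derivative_smoothstep': "(smoothstep' has_real_derivative smoothstep'' u) (at u)"
  unfolding smoothstep'_def [abs_def] smoothstep''_def
  by (rule derivative_eq_intros refl | simp add: algebra_simps)+

lemma smoothstep_has_real_derivative [derivative_intros]: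
  "(g has_real_derivative g') (at x within S) \<Longrightarrow>
    ((\<lambda>x. smoothstep (g x)) has_real_derivative smoothstep' (g x) * g') (at x within S)"
  using DERIV_chain2[OF has_real_derivative_smoothstep] by blast

lemma smoothstep'_has_real_derivative [derivative_intros]:
  "(g has_real_derivative g') (at x within S) \<Longrightarrow>
    ((\<lambda>x. smoothstep' (g x)) has_real_derivative smoothstep'' (g x) * g') (at x within S)"
  using DERIV_chain2[OF has_real_derivative_smoothstep'] by blast

lemma continuous_on_smoothstep [continuous_intros]:
  "continuous_on S g \<Longrightarrow> continuous_on S (\<lambda>x. smoothstep (g x))"
  unfolding smoothstep_def by (intro continuous_intros)

lemma continuous_on_smoothstep' [continuous_intros]:
  "continuous_on S g \<Longrightarrow> continuous_on S (\<lambda>x. smoothstep' (g x))"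
  unfolding smoothstep'_def by (intro continuous_intros)

lemma continuous_on_smoothstep'' [continuous_intros]:
  "continuous_on S g \<Longrightarrow> continuous_on S (\<lambda>x. smoothstep'' (g x))"
  unfolding smoothstep''_def by (intro continuous_intros)

lemma smoothstep_ge_1:
  assumes "1 \<le> u"
  shows "smoothstep u = 1" "smoothstep' u = 0" "smoothstep'' u = 0"
proof -
  have pp: "pospow n u = u ^ n" "pospow n (u - 1) = (u - 1) ^ n" if "0 < n" for n
    using assms that by (auto simp: pospow_def max_def)
  show "smoothstep u = 1" "smoothstep' u = 0" "smoothstep'' u = 0"
    unfolding smoothstep_def smoothstep'_def smoothstep''_def pp[OF zero_less_numeral] pp[OF zero_less_one]
    by (simp_all add: algebra_simps power2_eq_square power3_eq_cube)
qed

lemma smoothstep_nonpos: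
  assumes "u \<le> 0"
  shows "smoothstep u = 0" "smoothstep' u = 0" "smoothstep'' u = 0"
  using assms by (auto simp: smoothstep_def smoothstep'_def smoothstep''_def pospow_nonpos)

definition ramp_step :: "nat \<Rightarrow> real \<Rightarrow> real \<Rightarrow> real \<Rightarrow> real \<Rightarrow> real \<Rightarrow> real" where
  "ramp_step k p q u v y = pospow k (p*y + q) * smoothstep (u*y + v)"

definition ramp_step' :: "nat \<Rightarrow> real \<Rightarrow> real \<Rightarrow> real \<Rightarrow> real \<Rightarrow> real \<Rightarrow> real" where
  "ramp_step' k p q u v y = p * real k * pospow (k - 1) (p*y + q) * smoothstep (u*y + v)
     + u * pospow k (p*y + q) * smoothstep' (u*y + v)"

definition ramp_step'' :: "nat \<Rightarrow> real \<Rightarrow> real \<Rightarrow> real \<Rightarrow> real \<Rightarrow> real \<Rightarrow> real" where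
  "ramp_step'' k p q u v y = p^2 * real k * real (k - 1) * pospow (k - 2) (p*y + q) * smoothstep (u*y + v)
     + 2 * p * u * real k * pospow (k - 1) (p*y + q) * smoothstep' (u*y + v)
     + u^2 * pospow k (p*y + q) * smoothstep'' (u*y + v)"

lemma has_real_derivative_ramp_step:
  assumes "3 \<le> k"
  shows "(ramp_step k p q u v has_real_derivative ramp_step' k p q u v y) (at y)"
proof -
  have k: "2 \<le> k" "2 \<le> k - Suc 0" using assms by auto
  show ?thesis
    unfolding ramp_step_def [abs_def] ramp_step'_def
    by (rule derivative_eq_intros refl | simp add: k)+
qed

lemma has_real_derivative_ramp_step':
  assumes "3 \<le> k"
  shows "(ramp_step' k p q u v has_real_derivative ramp_step'' k p q u v y) (at y)"
proof -
  have k: "2 \<le> k" "2 \<le> k - Suc 0" and k2: "k - Suc (Suc 0) = k - 2" using assms by auto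
  show ?thesis
    unfolding ramp_step'_def [abs_def] ramp_step''_def
    by (rule derivative_eq_intros refl | simp add: k)+ (simp add: k2 power2_eq_square mult_ac)
qed

lemma continuous_on_ramp_step'': "continuous_on S (ramp_step'' k p q u v)"
  unfolding ramp_step''_def by (intro continuous_intros)

lemma C2_on_ramp_step: "3 \<le> k \<Longrightarrow> C2_on UNIV (ramp_step k p q u v)"
  unfolding C2_on_def
  using has_real_derivative_ramp_step has_real_derivative_ramp_step' continuous_on_ramp_step''
  by blast

lemma gen_ramp_step:
  assumes "3 \<le> k"
  shows "gen b \<sigma> (ramp_step k p q u v) y
     = b y * ramp_step' k p q u v y + 1/2 * (\<sigma> y)^2 * ramp_step'' k p q u v y"
proof -
  have "deriv (ramp_step k p q u v) = ramp_step' k p q u v"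
    "deriv (ramp_step' k p q u v) = ramp_step'' k p q u v"
    using has_real_derivative_ramp_step[OF assms] has_real_derivative_ramp_step'[OF assms]
    by (auto intro!: ext DERIV_imp_deriv)
  then show ?thesis by (simp add: gen_def)
qed

lemma continuous_on_gen_ramp_step:
  assumes "3 \<le> k" "continuous_on S b" "continuous_on S \<sigma>"
  shows "continuous_on S (gen b \<sigma> (ramp_step k p q u v))"
proof -
  have "continuous_on S (ramp_step' k p q u v)"
    unfolding ramp_step'_def by (intro continuous_intros)
  with assms show ?thesis
    unfolding gen_ramp_step[OF assms(1), abs_def]
    by (intro continuous_intros continuous_on_ramp_step'')
qed

lemma ramp_step_vanishing:
  assumes "3 \<le> k" "p*y + q \<le> 0 \<or> u*y + v \<le> 0"
  shows "ramp_step k p q u v y = 0" "ramp_step' k p q u v y = 0" "ramp_step'' k p q u v y = 0"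
  using assms smoothstep_nonpos[of "u*y + v"]
  by (auto simp: ramp_step_def ramp_step'_def ramp_step''_def pospow_nonpos)

lemma test_fun_ramp_step:
  assumes "3 \<le> k" "lo \<in> I" "hi \<in> I" "\<And>y. y \<notin> {lo..hi} \<Longrightarrow> p*y + q \<le> 0 \<or> u*y + v \<le> 0"
  shows "test_fun I (ramp_step k p q u v)"
  unfolding test_fun_def using C2_on_ramp_step assms ramp_step_vanishing(1) by blast

lemma exists_large_exponent:
  fixes B L s :: real
  assumes "0 < s" "0 \<le> B" "0 \<le> L"
  obtains k :: nat where "3 \<le> k" "L^2 \<le> real k * (s^2/2 * (real k - 1) - B*L)"
proof
  define k where "k = 3 + nat \<lceil>2*(B*L + L^2)/s^2\<rceil>"
  show "3 \<le> k" by (simp add: k_def)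
  have "2*(B*L + L^2)/s^2 \<le> real k - 1" unfolding k_def by linarith
  then have "s^2/2 * (2*(B*L + L^2)/s^2) \<le> s^2/2 * (real k - 1)"
    by (intro mult_left_mono) auto
  moreover have "s^2/2 * (2*(B*L + L^2)/s^2) = B*L + L^2" using assms by (simp add: field_simps)
  ultimately have "L^2 \<le> s^2/2 * (real k - 1) - B*L" by simp
  also have "\<dots> \<le> real k * (s^2/2 * (real k - 1) - B*L)"
    using mult_right_mono[of 1 "real k"] \<open>3 \<le> k\<close> order_trans[OF zero_le_power2 calculation]
    by fastforce
  finally show "L^2 \<le> real k * (s^2/2 * (real k - 1) - B*L)" .
qed

lemma ramp_step_le_gen:
  assumes k: "3 \<le> k" "L^2 \<le> real k * (s^2/2 * (real k - 1) - B*L)"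
    and p: "p^2 = 1" and "0 < s" "0 \<le> B" "0 \<le> L"
    and plateau: "1 \<le> u*y + v"
    and bounds: "0 < p*y + q \<Longrightarrow> \<bar>b y\<bar> \<le> B \<and> s \<le> \<sigma> y \<and> p*y + q \<le> L"
  shows "ramp_step k p q u v y \<le> gen b \<sigma> (ramp_step k p q u v) y"
proof -
  define z where "z = p*y + q"
  have gen_eq: "gen b \<sigma> (ramp_step k p q u v) y
      = real k * (p * b y * pospow (k - 1) z + (\<sigma> y)^2/2 * real (k - 1) * pospow (k - 2) z)"
    unfolding gen_ramp_step[OF k(1)] ramp_step'_def ramp_step''_def smoothstep_ge_1[OF plateau]
    by (simp add: p z_def algebra_simps)
  have f_eq: "ramp_step k p q u v y = pospow k z"
    by (simp add: ramp_step_def smoothstep_ge_1[OF plateau] z_def)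
  show ?thesis
  proof (cases "0 < z")
    case False
    with k(1) show ?thesis by (simp add: gen_eq f_eq pospow_nonpos)
  next
    case True
    with bounds have b: "\<bar>b y\<bar> \<le> B" and \<sigma>: "s \<le> \<sigma> y" and "z \<le> L" by (auto simp: z_def)
    define m where "m = z ^ (k - 2)"
    obtain j where j: "k = Suc (Suc j)" using k(1) by (intro that[of "k - 2"]) simp
    have pp: "pospow (k - 2) z = m" "pospow (k - 1) z = z * m" "pospow k z = z^2 * m"
      using True by (simp_all add: pospow_pos m_def j power2_eq_square)
    have "- (B*L) \<le> p * b y * z"
    proof -
      have "\<bar>p * b y * z\<bar> = \<bar>b y\<bar> * z" using p True by (auto simp: abs_mult power2_eq_1_iff)
      also have "\<dots> \<le> B * L" using b \<open>z \<le> L\<close> True \<open>0 \<le> B\<close> by (intro mult_mono) auto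
      finally show ?thesis by linarith
    qed
    moreover have "s^2/2 * (real k - 1) \<le> (\<sigma> y)^2/2 * real (k - 1)"
      using \<sigma> \<open>0 < s\<close> k(1) by (auto intro!: mult_right_mono power_mono)
    ultimately have drift: "s^2/2 * (real k - 1) - B*L \<le> p * b y * z + (\<sigma> y)^2/2 * real (k - 1)"
      by linarith
    have "z^2 \<le> L^2" using True \<open>z \<le> L\<close> by (intro power_mono) auto
    also have "\<dots> \<le> real k * (s^2/2 * (real k - 1) - B*L)" by (rule k(2))
    also have "\<dots> \<le> real k * (p * b y * z + (\<sigma> y)^2/2 * real (k - 1))"
      using drift by (intro mult_left_mono) auto
    finally have "z^2 * m \<le> real k * (p * b y * z + (\<sigma> y)^2/2 * real (k - 1)) * m"
      using True by (simp add: m_def mult_right_mono)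
    then show ?thesis unfolding gen_eq f_eq pp by (simp add: algebra_simps)
  qed
qed

section \<open>Path space and stopping times\<close>

lemma open_open_ivl: "open (open_ivl \<alpha> \<beta>)"
proof -
  have "open_ivl \<alpha> \<beta> = ereal -` {\<alpha> <..< \<beta>}" by (auto simp: open_ivl_def)
  then show ?thesis by (simp add: open_vimage continuous_on_ereal)
qed

lemma atLeastAtMost_subset_open_ivl:
  assumes "lo \<in> open_ivl \<alpha> \<beta>" "hi \<in> open_ivl \<alpha> \<beta>"
  shows "{lo..hi} \<subseteq> open_ivl \<alpha> \<beta>"
proof
  fix y assume "y \<in> {lo..hi}"
  with assms show "y \<in> open_ivl \<alpha> \<beta>"
    by (auto simp: open_ivl_def intro: less_le_trans[of \<alpha> "ereal lo"] le_less_trans[of _ "ereal hi"])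
qed

lemma open_ivl_below:
  assumes "x \<in> open_ivl \<alpha> \<beta>"
  obtains a where "a \<in> open_ivl \<alpha> \<beta>" "a < x"
proof -
  obtain e where "0 < e" "ball x e \<subseteq> open_ivl \<alpha> \<beta>"
    using open_contains_ball assms open_open_ivl by blast
  then show ?thesis by (intro that[of "x - e/2"]) (auto simp: dist_real_def)
qed

lemma open_ivl_above:
  assumes "x \<in> open_ivl \<alpha> \<beta>"
  obtains a where "a \<in> open_ivl \<alpha> \<beta>" "x < a"
proof -
  obtain e where "0 < e" "ball x e \<subseteq> open_ivl \<alpha> \<beta>"
    using open_contains_ball assms open_open_ivl by blast
  then show ?thesis by (intro that[of "x + e/2"]) (auto simp: dist_real_def)
qed

lemma
  shows space_nat_filt [simp]: "space (nat_filt \<Omega> t) = \<Omega>"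
    and sets_nat_filt: "sets (nat_filt \<Omega> t)
      = sigma_sets \<Omega> {{\<omega>\<in>\<Omega>. \<omega> s \<in> B} | s B. 0 \<le> s \<and> s \<le> t \<and> B \<in> sets borel}"
  unfolding nat_filt_def by (auto intro!: space_measure_of sets_measure_of)

lemma
  shows space_canon [simp]: "space (canon \<Omega>) = \<Omega>"
    and sets_canon: "sets (canon \<Omega>) = sigma_sets \<Omega> {{\<omega>\<in>\<Omega>. \<omega> s \<in> B} | s B. 0 \<le> s \<and> B \<in> sets borel}"
  unfolding canon_def by (auto intro!: space_measure_of sets_measure_of)

lemma sets_nat_filt_mono: "t \<le> u \<Longrightarrow> sets (nat_filt \<Omega> t) \<subseteq> sets (nat_filt \<Omega> u)"
  unfolding sets_nat_filt by (rule sigma_sets_mono') force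

lemma sets_nat_filt_subset_canon: "sets (nat_filt \<Omega> t) \<subseteq> sets (canon \<Omega>)"
  unfolding sets_nat_filt sets_canon by (rule sigma_sets_mono') auto

lemma eval_preimage_in_nat_filt:
  "0 \<le> s \<Longrightarrow> s \<le> t \<Longrightarrow> B \<in> sets borel \<Longrightarrow> {\<omega>\<in>\<Omega>. \<omega> s \<in> B} \<in> sets (nat_filt \<Omega> t)"
  unfolding sets_nat_filt by (rule sigma_sets.Basic) blast

lemma measurable_eval_canon:
  assumes "sets M = sets (canon \<Omega>)" "0 \<le> s"
  shows "(\<lambda>\<omega>. \<omega> s) \<in> borel_measurable M"
proof (rule measurableI)
  have "space M = \<Omega>" using sets_eq_imp_space_eq[OF assms(1)] by simp
  moreover fix B :: "real set" assume "B \<in> sets borel"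
  ultimately show "(\<lambda>\<omega>. \<omega> s) -` B \<inter> space M \<in> sets M"
    using eval_preimage_in_nat_filt[of s s B \<Omega>] sets_nat_filt_subset_canon assms
    by (auto simp: Int_def conj_commute)
qed simp

lemma stop_at_in_stop_times:
  assumes "0 \<le> t" and A: "A \<in> sets (nat_filt \<Omega> t)"
  shows "(\<lambda>\<omega>. if \<omega> \<in> A then ennreal t else \<infinity>) \<in> stop_times \<Omega> P I"
  unfolding stop_times_def aug_sets_def
proof (intro CollectI allI impI conjI ballI)
  fix s :: real assume "0 \<le> s"
  let ?E = "{\<omega> \<in> \<Omega>. (if \<omega> \<in> A then ennreal t else \<infinity>) \<le> ennreal s}"
  have "A \<subseteq> \<Omega>" using sets.sets_into_space[OF A] by simp
  then have E: "?E = (if t \<le> s then A else {})"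
    using \<open>0 \<le> t\<close> \<open>0 \<le> s\<close> by (auto simp: ennreal_le_iff top_unique)
  have "?E \<in> sets (nat_filt \<Omega> u)" if "s < u" for u
    using E A sets_nat_filt_mono[of t u \<Omega>] that by auto
  then show "\<exists>B N. (\<forall>u>s. B \<in> sets (nat_filt \<Omega> u)) \<and> N \<in> sets (canon \<Omega>) \<and> emeasure (P x) N = 0
      \<and> (?E - B) \<union> (B - ?E) \<subseteq> N" for x
    by (intro exI[of _ ?E] exI[of _ "{}"]) auto
qed auto

lemma never_in_stop_times: "(\<lambda>_. \<infinity>) \<in> stop_times \<Omega> P I"
  using stop_at_in_stop_times[of 0 "{}" \<Omega>] by simp

section \<open>Riemann sums\<close>

lemma abs_integral_sub_left_endpoint_le:
  fixes h :: "real \<Rightarrow> real"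
  assumes "a \<le> b" "continuous_on {a..b} h" "\<And>s. s \<in> {a..b} \<Longrightarrow> \<bar>h s - h a\<bar> \<le> e"
  shows "\<bar>integral {a..b} h - h a * (b - a)\<bar> \<le> e * (b - a)"
proof -
  have "((\<lambda>s. h s - h a) has_integral (integral {a..b} h - h a * (b - a))) (cbox a b)"
    using has_integral_diff[OF integrable_integral[OF integrable_continuous_interval[OF assms(2)]]
        has_integral_const_real[of "h a" a b]] assms(1)
    by (simp add: ac_simps)
  moreover have "0 \<le> e" using assms(3)[of a] assms(1) by simp
  ultimately have "norm (integral {a..b} h - h a * (b - a)) \<le> e * measure lborel (cbox a b)"
    using assms(3) by (intro has_integral_bound[where f = "\<lambda>s. h s - h a"]) auto
  with assms(1) show ?thesis by simp
qed

lemma integral_uniform_partition: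
  fixes h :: "real \<Rightarrow> real" and t :: real and m N :: nat
  assumes "continuous_on {0..t} h" "0 \<le> t" "0 < N" "m \<le> N"
  shows "integral {0..t * m / N} h = (\<Sum>i<m. integral {t * i / N..t * Suc i / N} h)"
  using assms(4)
proof (induction m)
  case (Suc m)
  have "0 \<le> t * m / N" "t * m / N \<le> t * Suc m / N" "t * Suc m / N \<le> t"
    using assms Suc.prems by (auto simp: divide_right_mono mult_left_mono divide_le_eq)
  moreover have "h integrable_on {0..t * Suc m / N}"
    using calculation(3) by (intro integrable_continuous_interval continuous_on_subset[OF assms(1)]) auto
  ultimately have "integral {0..t * m / N} h + integral {t * m / N..t * Suc m / N} h
      = integral {0..t * Suc m / N} h"
    by (intro Henstock_Kurzweil_Integration.integral_combine)
  with Suc show ?case by simp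
qed simp

lemma Riemann_sums_tendsto_integral:
  fixes h :: "real \<Rightarrow> real" and t :: real
  assumes h: "continuous_on {0..t} h" and "0 \<le> t"
  shows "(\<lambda>n. (\<Sum>i<Suc n. h (t * i / Suc n)) * (t / Suc n)) \<longlonglongrightarrow> integral {0..t} h"
proof (rule LIMSEQ_I)
  fix r :: real assume "0 < r"
  define e where "e = r / (2 * (t + 1))"
  have "0 < e" using \<open>0 < r\<close> \<open>0 \<le> t\<close> by (simp add: e_def)
  then obtain d where "0 < d"
    and d: "\<And>x x'. x \<in> {0..t} \<Longrightarrow> x' \<in> {0..t} \<Longrightarrow> dist x' x < d \<Longrightarrow> dist (h x') (h x) < e"
    using compact_uniformly_continuous[OF h] unfolding uniformly_continuous_on_def by (metis compact_Icc)
  obtain n0 :: nat where "t / d < n0" using reals_Archimedean2 by blast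
  show "\<exists>no. \<forall>n\<ge>no. norm ((\<Sum>i<Suc n. h (t * i / Suc n)) * (t / Suc n) - integral {0..t} h) < r"
  proof (intro exI allI impI)
    fix n assume "n0 \<le> n"
    define N where "N = Suc n"
    define x where "x i = t * real i / real N" for i
    have "t < real n0 * d" using \<open>t / d < n0\<close> \<open>0 < d\<close> by (simp add: pos_divide_less_eq)
    also have "\<dots> \<le> N * d"
      using \<open>n0 \<le> n\<close> \<open>0 < d\<close> by (intro mult_right_mono) (auto simp: N_def)
    finally have "t < N * d" .
    then have "t / N < d" by (simp add: N_def divide_less_eq mult.commute)
    have piece: "\<bar>integral {x i..x (Suc i)} h - h (x i) * (t / N)\<bar> \<le> e * (t / N)" if "i < N" for i
    proof -
      have len: "x (Suc i) - x i = t / N" by (simp add: x_def add_divide_distrib algebra_simps)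
      have "x (Suc i) \<le> t" "0 \<le> x i"
        using \<open>0 \<le> t\<close> that by (auto simp: x_def N_def divide_le_eq mult_left_mono)
      then have sub: "{x i..x (Suc i)} \<subseteq> {0..t}" by auto
      have close: "\<bar>h s - h (x i)\<bar> \<le> e" if "s \<in> {x i..x (Suc i)}" for s
        using d[of "x i" s] that sub len \<open>t / N < d\<close> by (force simp: dist_real_def)
      have "x i \<le> x (Suc i)"
        using len \<open>0 \<le> t\<close> by (metis diff_ge_0_iff_ge divide_nonneg_nonneg of_nat_0_le_iff)
      from abs_integral_sub_left_endpoint_le[OF this continuous_on_subset[OF h sub] close]
      show ?thesis unfolding len .
    qed
    have "integral {0..t} h = (\<Sum>i<N. integral {x i..x (Suc i)} h)"
      using integral_uniform_partition[OF h \<open>0 \<le> t\<close>, of N N] by (simp add: x_def N_def)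
    then have "\<bar>(\<Sum>i<N. h (x i)) * (t / N) - integral {0..t} h\<bar>
        = \<bar>\<Sum>i<N. integral {x i..x (Suc i)} h - h (x i) * (t / N)\<bar>"
      by (simp add: sum_subtractf sum_distrib_right sum_divide_distrib abs_minus_commute)
    also have "\<dots> \<le> (\<Sum>i<N. e * (t / N))"
      by (rule order_trans[OF sum_abs sum_mono]) (use piece in simp)
    also have "\<dots> = e * t" by (simp add: N_def)
    also have "\<dots> < r"
      using \<open>0 < r\<close> \<open>0 \<le> t\<close> by (simp add: e_def divide_less_eq)
    finally show "norm ((\<Sum>i<Suc n. h (t * i / Suc n)) * (t / Suc n) - integral {0..t} h) < r"
      by (simp add: N_def x_def)
  qed
qed

section \<open>Dynkin's formula and reachability\<close>

lemma continuous_on_test_fun: "test_fun I f \<Longrightarrow> continuous_on S f"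
  unfolding test_fun_def C2_on_def by (metis DERIV_isCont UNIV_I continuous_at_imp_continuous_on)

lemma test_fun_bounded:
  assumes "test_fun I f"
  obtains M where "0 \<le> M" "\<And>y. \<bar>f y\<bar> \<le> M"
proof -
  obtain a c where out: "\<forall>y. y \<notin> {a..c} \<longrightarrow> f y = 0" using assms unfolding test_fun_def by blast
  have "bounded (f ` {a..c})"
    by (intro compact_imp_bounded compact_continuous_image continuous_on_test_fun[OF assms]) simp
  then obtain M where "\<forall>y\<in>{a..c}. \<bar>f y\<bar> \<le> M" unfolding bounded_iff by auto
  with out show ?thesis by (intro that[of "max M 0"]) (force simp: le_max_iff_disj)+
qed

lemma continuous_on_comp_path:
  assumes "\<omega> \<in> paths \<alpha> \<beta>" "continuous_on (open_ivl \<alpha> \<beta>) g"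
  shows "continuous_on S (\<lambda>s. g (\<omega> s))"
  using assms unfolding paths_def
  by (auto intro: continuous_on_compose2[of "open_ivl \<alpha> \<beta>" g] continuous_on_subset)

lemma
  assumes "solves_MP \<alpha> \<beta> b \<sigma> x Q"
  shows solves_MP_prob_space: "prob_space Q"
    and sets_solves_MP: "sets Q = sets (canon (paths \<alpha> \<beta>))"
    and space_solves_MP: "space Q = paths \<alpha> \<beta>"
    and solves_MP_AE_start: "AE \<omega> in Q. \<omega> 0 = x"
  using assms sets_eq_imp_space_eq[of Q "canon (paths \<alpha> \<beta>)"] by (auto simp: solves_MP_def)

lemma integrable_test_fun_eval:
  assumes MP: "solves_MP \<alpha> \<beta> b \<sigma> x Q" and f: "test_fun (open_ivl \<alpha> \<beta>) f" and "0 \<le> s"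
  shows "integrable Q (\<lambda>\<omega>. f (\<omega> s))"
proof -
  interpret prob_space Q by (rule solves_MP_prob_space[OF MP])
  obtain M where "\<And>y. \<bar>f y\<bar> \<le> M" using test_fun_bounded[OF f] by blast
  moreover have "(\<lambda>\<omega>. f (\<omega> s)) \<in> borel_measurable Q"
    using measurable_eval_canon[OF sets_solves_MP[OF MP] \<open>0 \<le> s\<close>]
      borel_measurable_continuous_onI[OF continuous_on_test_fun[OF f]]
    by (rule measurable_compose)
  ultimately show ?thesis by (intro integrable_const_bound[where B = M]) auto
qed

lemma solves_MP_Dynkin:
  assumes MP: "solves_MP \<alpha> \<beta> b \<sigma> x Q" and f: "test_fun (open_ivl \<alpha> \<beta>) f" and "0 \<le> t"
  shows "integrable Q (\<lambda>\<omega>. integral {0..t} (\<lambda>s. gen b \<sigma> f (\<omega> s)))" (is "integrable Q ?G")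
    and "(\<integral>\<omega>. integral {0..t} (\<lambda>s. gen b \<sigma> f (\<omega> s)) \<partial>Q) = (\<integral>\<omega>. f (\<omega> t) \<partial>Q) - f x"
proof -
  interpret prob_space Q by (rule solves_MP_prob_space[OF MP])
  define M where "M t \<omega> = f (\<omega> t) - f (\<omega> 0) - integral {0..t} (\<lambda>s. gen b \<sigma> f (\<omega> s))"
    for t :: real and \<omega> :: "real \<Rightarrow> real"
  have "integrable Q (M t) \<and> (\<forall>s A. 0 \<le> s \<longrightarrow> s \<le> t \<longrightarrow> A \<in> sets (nat_filt (paths \<alpha> \<beta>) s) \<longrightarrow>
      (\<integral>\<omega>\<in>A. M t \<omega> \<partial>Q) = (\<integral>\<omega>\<in>A. M s \<omega> \<partial>Q))"
    using MP f \<open>0 \<le> t\<close> unfolding solves_MP_def Let_def M_def by blast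
  then have Mt: "integrable Q (M t)"
    and "(\<integral>\<omega>\<in>paths \<alpha> \<beta>. M t \<omega> \<partial>Q) = (\<integral>\<omega>\<in>paths \<alpha> \<beta>. M 0 \<omega> \<partial>Q)"
    using \<open>0 \<le> t\<close> sets.top[of "nat_filt (paths \<alpha> \<beta>) 0"] by auto
  then have M0: "(\<integral>\<omega>. M t \<omega> \<partial>Q) = 0"
    using set_integral_space[OF Mt] space_solves_MP[OF MP] by (simp add: M_def[of 0])
  have G: "?G = (\<lambda>\<omega>. f (\<omega> t) - f (\<omega> 0) - M t \<omega>)" by (simp add: M_def)
  have int: "integrable Q (\<lambda>\<omega>. f (\<omega> t))" "integrable Q (\<lambda>\<omega>. f (\<omega> 0))"
    using integrable_test_fun_eval[OF MP f] \<open>0 \<le> t\<close> by auto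
  show "integrable Q ?G" unfolding G using int Mt by auto
  have "(\<integral>\<omega>. f (\<omega> 0) \<partial>Q) = (\<integral>\<omega>. f x \<partial>Q)"
    using solves_MP_AE_start[OF MP] int(2) by (intro integral_cong_AE) auto
  then show "(\<integral>\<omega>. ?G \<omega> \<partial>Q) = (\<integral>\<omega>. f (\<omega> t) \<partial>Q) - f x"
    unfolding G using int Mt M0 by (simp add: prob_space)
qed

lemma expectation_path_integral_ge:
  fixes Q :: "(real \<Rightarrow> real) measure"
  assumes "prob_space Q" "sets Q = sets (canon \<Omega>)" "\<And>\<omega>. \<omega> \<in> \<Omega> \<Longrightarrow> continuous_on UNIV \<omega>"
    and f: "continuous_on UNIV f" "\<And>y. \<bar>f y\<bar> \<le> M"
    and "0 \<le> t" and ge: "\<And>s. 0 \<le> s \<Longrightarrow> s \<le> t \<Longrightarrow> m \<le> (\<integral>\<omega>. f (\<omega> s) \<partial>Q)"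
  shows "integrable Q (\<lambda>\<omega>. integral {0..t} (\<lambda>s. f (\<omega> s)))" (is "integrable Q ?F")
    and "t * m \<le> (\<integral>\<omega>. integral {0..t} (\<lambda>s. f (\<omega> s)) \<partial>Q)"
proof -
  interpret prob_space Q by fact
  have space: "space Q = \<Omega>" using sets_eq_imp_space_eq[OF assms(2)] by simp
  have fmeas: "(\<lambda>\<omega>. f (\<omega> s)) \<in> borel_measurable Q" if "0 \<le> s" for s
    using measurable_eval_canon[OF assms(2) that] borel_measurable_continuous_onI[OF f(1)]
    by (rule measurable_compose)
  have fint: "integrable Q (\<lambda>\<omega>. f (\<omega> s))" if "0 \<le> s" for s
    using fmeas[OF that] f(2) by (intro integrable_const_bound[where B = M]) auto
  have fpath: "continuous_on {0..t} (\<lambda>s. f (\<omega> s))" if "\<omega> \<in> \<Omega>" for \<omega>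
    using continuous_on_compose2[OF f(1) continuous_on_subset[OF assms(3)[OF that]]] by auto
  define S where "S n \<omega> = (\<Sum>i<Suc n. f (\<omega> (t * i / Suc n))) * (t / Suc n)"
    for n :: nat and \<omega> :: "real \<Rightarrow> real"
  have S_tendsto: "(\<lambda>n. S n \<omega>) \<longlonglongrightarrow> ?F \<omega>" if "\<omega> \<in> space Q" for \<omega>
    using fpath \<open>0 \<le> t\<close> space that unfolding S_def by (intro Riemann_sums_tendsto_integral) auto
  then have S_lim: "AE \<omega> in Q. (\<lambda>n. S n \<omega>) \<longlonglongrightarrow> ?F \<omega>" by (rule AE_I2)
  have S_meas: "S n \<in> borel_measurable Q" for n
    unfolding S_def using \<open>0 \<le> t\<close> by (intro borel_measurable_times borel_measurable_sum fmeas) auto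
  have S_bound: "AE \<omega> in Q. norm (S n \<omega>) \<le> t * M" for n
  proof (intro AE_I2)
    fix \<omega>
    have "\<bar>\<Sum>i<Suc n. f (\<omega> (t * i / Suc n))\<bar> \<le> (\<Sum>i<Suc n. M)"
      using f(2) by (intro order_trans[OF sum_abs sum_mono])
    then have "\<bar>\<Sum>i<Suc n. f (\<omega> (t * i / Suc n))\<bar> \<le> Suc n * M" by simp
    then have "\<bar>\<Sum>i<Suc n. f (\<omega> (t * i / Suc n))\<bar> * (t / Suc n) \<le> (Suc n * M) * (t / Suc n)"
      using \<open>0 \<le> t\<close> by (intro mult_right_mono) auto
    then show "norm (S n \<omega>) \<le> t * M"
      using \<open>0 \<le> t\<close> by (simp add: S_def abs_mult mult.commute)
  qed
  have F_meas: "?F \<in> borel_measurable Q"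
    by (rule borel_measurable_LIMSEQ_real[OF S_tendsto S_meas])
  show "integrable Q ?F"
    using integrable_dominated_convergence[OF F_meas S_meas _ S_lim S_bound] by simp
  have "(\<lambda>n. \<integral>\<omega>. S n \<omega> \<partial>Q) \<longlonglongrightarrow> (\<integral>\<omega>. ?F \<omega> \<partial>Q)"
    using integral_dominated_convergence[OF F_meas S_meas _ S_lim S_bound] by simp
  moreover have "t * m \<le> (\<integral>\<omega>. S n \<omega> \<partial>Q)" for n
  proof -
    have "(\<integral>\<omega>. S n \<omega> \<partial>Q) = (\<Sum>i<Suc n. \<integral>\<omega>. f (\<omega> (t * i / Suc n)) \<partial>Q) * (t / Suc n)"
      unfolding S_def using \<open>0 \<le> t\<close> fint by (simp add: Bochner_Integration.integral_sum)
    moreover have "(\<Sum>i<Suc n. m) * (t / Suc n) \<le> (\<Sum>i<Suc n. \<integral>\<omega>. f (\<omega> (t * i / Suc n)) \<partial>Q) * (t / Suc n)"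
      using \<open>0 \<le> t\<close> by (intro mult_right_mono sum_mono ge) (auto simp: divide_le_eq mult_left_mono)
    ultimately show ?thesis by (simp add: mult.commute)
  qed
  ultimately show "t * m \<le> (\<integral>\<omega>. ?F \<omega> \<partial>Q)" by (intro LIMSEQ_le_const) auto
qed

lemma path_integral_gen_ge:
  assumes \<omega>: "\<omega> \<in> paths \<alpha> \<beta>" and f: "test_fun (open_ivl \<alpha> \<beta>) f"
    and Lf: "continuous_on (open_ivl \<alpha> \<beta>) (gen b \<sigma> f)" and "0 \<le> \<kappa>"
    and dom: "\<forall>s\<ge>0. 0 \<le> f (\<omega> s) \<and> \<kappa> * f (\<omega> s) \<le> gen b \<sigma> f (\<omega> s)"
  shows "0 \<le> \<kappa> * integral {0..t} (\<lambda>s. f (\<omega> s))"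
    and "\<kappa> * integral {0..t} (\<lambda>s. f (\<omega> s)) \<le> integral {0..t} (\<lambda>s. gen b \<sigma> f (\<omega> s))"
proof -
  have cont: "continuous_on {0..t} (\<lambda>s. f (\<omega> s))" "continuous_on {0..t} (\<lambda>s. gen b \<sigma> f (\<omega> s))"
    by (rule continuous_on_comp_path[OF \<omega> continuous_on_test_fun[OF f]] continuous_on_comp_path[OF \<omega> Lf])+
  show "0 \<le> \<kappa> * integral {0..t} (\<lambda>s. f (\<omega> s))"
    using dom by (intro mult_nonneg_nonneg \<open>0 \<le> \<kappa>\<close> integral_nonneg integrable_continuous_interval[OF cont(1)]) auto
  have "\<kappa> * integral {0..t} (\<lambda>s. f (\<omega> s)) = integral {0..t} (\<lambda>s. \<kappa> * f (\<omega> s))" by simp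
  also have "\<dots> \<le> integral {0..t} (\<lambda>s. gen b \<sigma> f (\<omega> s))"
    using dom continuous_on_mult_left[OF cont(1), of \<kappa>]
    by (intro integral_le integrable_continuous_interval cont(2)) auto
  finally show "\<kappa> * integral {0..t} (\<lambda>s. f (\<omega> s)) \<le> integral {0..t} (\<lambda>s. gen b \<sigma> f (\<omega> s))" .
qed

lemma solves_MP_not_AE_gen_dominates:
  assumes MP: "solves_MP \<alpha> \<beta> b \<sigma> x Q" and f: "test_fun (open_ivl \<alpha> \<beta>) f"
    and Lf: "continuous_on (open_ivl \<alpha> \<beta>) (gen b \<sigma> f)" and "0 < \<kappa>" "0 < f x"
  shows "\<not> (AE \<omega> in Q. \<forall>s\<ge>0. 0 \<le> f (\<omega> s) \<and> \<kappa> * f (\<omega> s) \<le> gen b \<sigma> f (\<omega> s))"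
proof
  assume dom: "AE \<omega> in Q. \<forall>s\<ge>0. 0 \<le> f (\<omega> s) \<and> \<kappa> * f (\<omega> s) \<le> gen b \<sigma> f (\<omega> s)"
  interpret prob_space Q by (rule solves_MP_prob_space[OF MP])
  obtain M where M: "\<And>y. \<bar>f y\<bar> \<le> M" using test_fun_bounded[OF f] by blast
  define F where "F t \<omega> = integral {0..t} (\<lambda>s. f (\<omega> s))" for t :: real and \<omega> :: "real \<Rightarrow> real"
  define G where "G t \<omega> = integral {0..t} (\<lambda>s. gen b \<sigma> f (\<omega> s))" for t :: real and \<omega> :: "real \<Rightarrow> real"
  have path: "AE \<omega> in Q. \<forall>t. 0 \<le> \<kappa> * F t \<omega> \<and> \<kappa> * F t \<omega> \<le> G t \<omega>"
    using dom AE_space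
  proof eventually_elim
    case (elim \<omega>)
    with path_integral_gen_ge[OF _ f Lf, of \<omega> \<kappa>] \<open>0 < \<kappa>\<close> space_solves_MP[OF MP]
    show ?case by (simp add: F_def G_def)
  qed
  have G: "integrable Q (G t)" "(\<integral>\<omega>. G t \<omega> \<partial>Q) = (\<integral>\<omega>. f (\<omega> t) \<partial>Q) - f x" if "0 \<le> t" for t
    using solves_MP_Dynkin[OF MP f that] by (simp_all add: G_def [abs_def])
  have "f x \<le> (\<integral>\<omega>. f (\<omega> t) \<partial>Q)" if "0 \<le> t" for t
  proof -
    have "0 \<le> (\<integral>\<omega>. G t \<omega> \<partial>Q)"
      using path by (intro integral_nonneg_AE) (auto elim!: eventually_mono intro: order_trans)
    with G[OF that] show ?thesis by simp
  qed
  then have F: "integrable Q (F t)" "t * f x \<le> (\<integral>\<omega>. F t \<omega> \<partial>Q)" if "0 \<le> t" for t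
    using expectation_path_integral_ge[OF prob_space_axioms sets_solves_MP[OF MP] _
        continuous_on_test_fun[OF f] M that] that
    by (auto simp: F_def [abs_def] paths_def)
  define T where "T = (M + 1) / (\<kappa> * f x)"
  have "0 \<le> T" using M[of x] \<open>0 < \<kappa>\<close> \<open>0 < f x\<close> by (simp add: T_def)
  have "M + 1 = \<kappa> * (T * f x)" using \<open>0 < \<kappa>\<close> \<open>0 < f x\<close> by (simp add: T_def)
  also have "\<dots> \<le> (\<integral>\<omega>. \<kappa> * F T \<omega> \<partial>Q)" using F[OF \<open>0 \<le> T\<close>] \<open>0 < \<kappa>\<close> by simp
  also have "\<dots> \<le> (\<integral>\<omega>. G T \<omega> \<partial>Q)"
    using F[OF \<open>0 \<le> T\<close>] G[OF \<open>0 \<le> T\<close>] path by (intro integral_mono_AE) (auto elim!: eventually_mono)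
  also have "\<dots> \<le> M"
  proof -
    have "(\<integral>\<omega>. f (\<omega> T) \<partial>Q) \<le> (\<integral>\<omega>. M \<partial>Q)"
      using integrable_test_fun_eval[OF MP f \<open>0 \<le> T\<close>] M by (intro integral_mono) (auto simp: abs_le_iff)
    then show ?thesis using G[OF \<open>0 \<le> T\<close>] \<open>0 < f x\<close> by (simp add: prob_space)
  qed
  finally show False by simp
qed

lemma ramp_step_barrier:
  assumes b: "continuous_on (open_ivl \<alpha> \<beta>) b" and \<sigma>: "continuous_on (open_ivl \<alpha> \<beta>) \<sigma>"
    and \<sigma>_pos: "\<forall>y\<in>open_ivl \<alpha> \<beta>. 0 < \<sigma> y"
    and p: "p^2 = 1" and "lo \<in> open_ivl \<alpha> \<beta>" "hi \<in> open_ivl \<alpha> \<beta>"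
    and out: "\<And>y. y \<notin> {lo..hi} \<Longrightarrow> p*y + q \<le> 0 \<or> u*y + v \<le> 0"
    and m: "ml \<in> open_ivl \<alpha> \<beta>" "mr \<in> open_ivl \<alpha> \<beta>" "ml \<le> mr"
    and plateau: "\<And>y. 1 \<le> u*y + v \<Longrightarrow> 0 < p*y + q \<Longrightarrow> y \<in> {ml..mr} \<and> p*y + q \<le> L"
    and "0 \<le> L"
  obtains k where "test_fun (open_ivl \<alpha> \<beta>) (ramp_step k p q u v)"
    "continuous_on (open_ivl \<alpha> \<beta>) (gen b \<sigma> (ramp_step k p q u v))"
    "\<And>y. 1 \<le> u*y + v \<Longrightarrow> 0 < p*y + q \<Longrightarrow> 0 < ramp_step k p q u v y"
    "\<And>y. 1 \<le> u*y + v \<or> u*y + v \<le> 0 \<Longrightarrow>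
       0 \<le> ramp_step k p q u v y \<and> ramp_step k p q u v y \<le> gen b \<sigma> (ramp_step k p q u v) y"
proof -
  have sub: "{ml..mr} \<subseteq> open_ivl \<alpha> \<beta>" using atLeastAtMost_subset_open_ivl[OF m(1,2)] .
  obtain ys where ys: "ys \<in> {ml..mr}" "\<And>y. y \<in> {ml..mr} \<Longrightarrow> \<sigma> ys \<le> \<sigma> y"
    using continuous_attains_inf[of "{ml..mr}" \<sigma>] continuous_on_subset[OF \<sigma> sub] m(3) by auto
  have "bounded (b ` {ml..mr})"
    by (intro compact_imp_bounded compact_continuous_image continuous_on_subset[OF b sub]) simp
  then obtain B where B: "\<forall>y\<in>{ml..mr}. \<bar>b y\<bar> \<le> B" unfolding bounded_iff by auto
  have "0 < \<sigma> ys" "0 \<le> B" using ys(1) sub \<sigma>_pos bspec[OF B, of ml] m(3) by auto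
  then obtain k where k: "3 \<le> k" "L^2 \<le> real k * ((\<sigma> ys)^2/2 * (real k - 1) - B*L)"
    using exists_large_exponent \<open>0 \<le> L\<close> by blast
  show ?thesis
  proof (rule that[of k])
    show "test_fun (open_ivl \<alpha> \<beta>) (ramp_step k p q u v)"
      using test_fun_ramp_step[OF k(1) assms(5,6) out] .
    show "continuous_on (open_ivl \<alpha> \<beta>) (gen b \<sigma> (ramp_step k p q u v))"
      using continuous_on_gen_ramp_step[OF k(1) b \<sigma>] .
    show "0 < ramp_step k p q u v y" if "1 \<le> u*y + v" "0 < p*y + q" for y
      using that by (simp add: ramp_step_def smoothstep_ge_1 pospow_pos)
    fix y assume "1 \<le> u*y + v \<or> u*y + v \<le> 0"
    then consider "1 \<le> u*y + v" | "u*y + v \<le> 0" by blast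
    then show "0 \<le> ramp_step k p q u v y \<and> ramp_step k p q u v y \<le> gen b \<sigma> (ramp_step k p q u v) y"
    proof cases
      case 1
      have "ramp_step k p q u v y \<le> gen b \<sigma> (ramp_step k p q u v) y"
        using plateau[OF 1] B ys(2) \<open>0 < \<sigma> ys\<close> \<open>0 \<le> B\<close> \<open>0 \<le> L\<close>
        by (intro ramp_step_le_gen[OF k p _ _ _ 1]) auto
      then show ?thesis using 1 by (simp add: ramp_step_def smoothstep_ge_1 pospow_nonneg)
    next
      case 2
      then show ?thesis using ramp_step_vanishing[OF k(1)] gen_ramp_step[OF k(1)] by simp
    qed
  qed
qed

lemma exists_barrier_outside_interval:
  assumes b: "continuous_on (open_ivl \<alpha> \<beta>) b" and \<sigma>: "continuous_on (open_ivl \<alpha> \<beta>) \<sigma>"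
    and \<sigma>_pos: "\<forall>y\<in>open_ivl \<alpha> \<beta>. 0 < \<sigma> y"
    and x: "x \<in> open_ivl \<alpha> \<beta>" "x \<notin> {c<..<d}"
    and cd: "c \<in> open_ivl \<alpha> \<beta>" "d \<in> open_ivl \<alpha> \<beta>" "c < d"
  obtains f where "test_fun (open_ivl \<alpha> \<beta>) f" "continuous_on (open_ivl \<alpha> \<beta>) (gen b \<sigma> f)" "0 < f x"
    "\<And>y. y \<notin> {c<..<d} \<Longrightarrow> 0 \<le> f y \<and> f y \<le> gen b \<sigma> f y"
proof -
  define m where "m = (c + d) / 2"
  define e where "e = (d - c) / 2"
  have "m \<in> open_ivl \<alpha> \<beta>" "0 < e" "c = m - e" "d = m + e"
    using atLeastAtMost_subset_open_ivl[OF cd(1,2)] cd(3) by (auto simp: m_def e_def field_simps)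
  have ramp_le: "1 \<le> s / e \<longleftrightarrow> e \<le> s" and ramp_0: "s / e \<le> 0 \<longleftrightarrow> s \<le> 0" for s
    using \<open>0 < e\<close> by (simp_all add: le_divide_eq divide_le_0_iff)
  consider "x \<le> c" | "d \<le> x" using x(2) by force
  then show ?thesis
  proof cases
    case 1
    obtain a where a: "a \<in> open_ivl \<alpha> \<beta>" "a < x" using open_ivl_below[OF x(1)] .
    define u v where "u = -1/e" and "v = m/e"
    have "u*y + v = (m - y) / e" for y by (simp add: u_def v_def diff_divide_distrib)
    then have step: "1 \<le> u*y + v \<longleftrightarrow> y \<le> c" "u*y + v \<le> 0 \<longleftrightarrow> m \<le> y" for y
      using \<open>c = m - e\<close> by (auto simp: ramp_le ramp_0)
    obtain k where "test_fun (open_ivl \<alpha> \<beta>) (ramp_step k 1 (-a) u v)"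
      "continuous_on (open_ivl \<alpha> \<beta>) (gen b \<sigma> (ramp_step k 1 (-a) u v))"
      "\<And>y. 1 \<le> u*y + v \<Longrightarrow> 0 < 1*y + -a \<Longrightarrow> 0 < ramp_step k 1 (-a) u v y"
      "\<And>y. 1 \<le> u*y + v \<or> u*y + v \<le> 0 \<Longrightarrow> 0 \<le> ramp_step k 1 (-a) u v y
        \<and> ramp_step k 1 (-a) u v y \<le> gen b \<sigma> (ramp_step k 1 (-a) u v) y"
      by (rule ramp_step_barrier[where p = 1 and q = "-a" and u = u and v = v
            and lo = a and hi = m and ml = a and mr = c and L = "c - a", OF b \<sigma> \<sigma>_pos])
        (use a 1 \<open>m \<in> _\<close> cd(1) in \<open>auto simp: step\<close>)
    moreover have "y \<le> c \<or> m \<le> y" if "y \<notin> {c<..<d}" for y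
      using that \<open>d = m + e\<close> \<open>0 < e\<close> by auto
    ultimately show ?thesis
      using 1 a by (intro that) (auto simp: step)
  next
    case 2
    obtain a where a: "a \<in> open_ivl \<alpha> \<beta>" "x < a" using open_ivl_above[OF x(1)] .
    define u v where "u = 1/e" and "v = -m/e"
    have "u*y + v = (y - m) / e" for y by (simp add: u_def v_def diff_divide_distrib)
    then have step: "1 \<le> u*y + v \<longleftrightarrow> d \<le> y" "u*y + v \<le> 0 \<longleftrightarrow> y \<le> m" for y
      using \<open>d = m + e\<close> by (auto simp: ramp_le ramp_0)
    obtain k where "test_fun (open_ivl \<alpha> \<beta>) (ramp_step k (-1) a u v)"
      "continuous_on (open_ivl \<alpha> \<beta>) (gen b \<sigma> (ramp_step k (-1) a u v))"
      "\<And>y. 1 \<le> u*y + v \<Longrightarrow> 0 < -1*y + a \<Longrightarrow> 0 < ramp_step k (-1) a u v y"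
      "\<And>y. 1 \<le> u*y + v \<or> u*y + v \<le> 0 \<Longrightarrow> 0 \<le> ramp_step k (-1) a u v y
        \<and> ramp_step k (-1) a u v y \<le> gen b \<sigma> (ramp_step k (-1) a u v) y"
      by (rule ramp_step_barrier[where p = "-1" and q = a and u = u and v = v
            and lo = m and hi = a and ml = d and mr = a and L = "a - d", OF b \<sigma> \<sigma>_pos])
        (use a 2 \<open>m \<in> _\<close> cd(2) in \<open>auto simp: step\<close>)
    moreover have "d \<le> y \<or> y \<le> m" if "y \<notin> {c<..<d}" for y
      using that \<open>c = m - e\<close> \<open>0 < e\<close> by auto
    ultimately show ?thesis
      using 2 a by (intro that) (auto simp: step)
  qed
qed

lemma AE_forall_not_in_open:
  fixes Q :: "(real \<Rightarrow> real) measure"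
  assumes cont: "\<And>\<omega>. \<omega> \<in> space Q \<Longrightarrow> continuous_on UNIV \<omega>" and "open U"
    and never: "\<And>t. 0 \<le> t \<Longrightarrow> AE \<omega> in Q. \<omega> t \<notin> U"
  shows "AE \<omega> in Q. \<forall>t\<ge>0. \<omega> t \<notin> U"
proof -
  have "countable {q::real. q \<in> \<rat> \<and> 0 \<le> q}"
    by (rule countable_subset[OF _ countable_rat]) auto
  then have "AE \<omega> in Q. \<forall>q\<in>{q::real. q \<in> \<rat> \<and> 0 \<le> q}. \<omega> q \<notin> U"
    using never by (subst AE_ball_countable) auto
  with AE_space show ?thesis
  proof eventually_elim
    case (elim \<omega>)
    show ?case
    proof (intro allI impI notI)
      fix t :: real assume "0 \<le> t" "\<omega> t \<in> U"
      \<comment> \<open>by continuity the path stays in \<open>U\<close> up to some rational time after \<open>t\<close>\<close>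
      have "isCont \<omega> t" using cont[OF elim(1)] by (simp add: continuous_on_eq_continuous_at)
      then have "\<forall>\<^sub>F s in at t. \<omega> s \<in> U"
        using \<open>open U\<close> \<open>\<omega> t \<in> U\<close> by (simp add: isCont_def topological_tendstoD)
      then obtain \<delta> where "0 < \<delta>" "\<And>s. s \<noteq> t \<Longrightarrow> dist s t < \<delta> \<Longrightarrow> \<omega> s \<in> U"
        unfolding eventually_at by auto
      moreover obtain q where "q \<in> \<rat>" "t < q" "q < t + \<delta>"
        using Rats_dense_in_real[of t "t + \<delta>"] \<open>0 < \<delta>\<close> by auto
      ultimately show False using elim(2) \<open>0 \<le> t\<close> by (auto simp: dist_real_def)
    qed
  qed
qed

lemma solves_MP_reaches_interval:
  assumes MP: "solves_MP \<alpha> \<beta> b \<sigma> x Q"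
    and b: "continuous_on (open_ivl \<alpha> \<beta>) b" and \<sigma>: "continuous_on (open_ivl \<alpha> \<beta>) \<sigma>"
    and \<sigma>_pos: "\<forall>y\<in>open_ivl \<alpha> \<beta>. 0 < \<sigma> y"
    and x: "x \<in> open_ivl \<alpha> \<beta>"
    and cd: "c \<in> open_ivl \<alpha> \<beta>" "d \<in> open_ivl \<alpha> \<beta>" "c < d"
  shows "\<exists>t\<ge>0. 0 < measure Q {\<omega> \<in> paths \<alpha> \<beta>. \<omega> t \<in> {c<..<d}}"
proof (rule ccontr)
  assume never: "\<not> ?thesis"
  interpret prob_space Q by (rule solves_MP_prob_space[OF MP])
  have "AE \<omega> in Q. \<omega> t \<notin> {c<..<d}" if "0 \<le> t" for t
  proof -
    have "{\<omega> \<in> paths \<alpha> \<beta>. \<omega> t \<in> {c<..<d}} \<in> sets Q"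
      using eval_preimage_in_nat_filt[of t t "{c<..<d}" "paths \<alpha> \<beta>"] that
        sets_nat_filt_subset_canon[of "paths \<alpha> \<beta>" t] sets_solves_MP[OF MP]
      by auto
    moreover have "measure Q {\<omega> \<in> paths \<alpha> \<beta>. \<omega> t \<in> {c<..<d}} = 0"
      using never that measure_nonneg[of Q] by (meson linorder_neqE_linordered_idom not_le)
    ultimately show ?thesis
      using space_solves_MP[OF MP] by (intro AE_I'[where N = "{\<omega> \<in> paths \<alpha> \<beta>. \<omega> t \<in> {c<..<d}}"])
        (auto simp: emeasure_eq_measure null_sets_def)
  qed
  then have avoid: "AE \<omega> in Q. \<forall>t\<ge>0. \<omega> t \<notin> {c<..<d}"
    using space_solves_MP[OF MP] by (intro AE_forall_not_in_open) (auto simp: paths_def)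
  have "x \<notin> {c<..<d}"
  proof
    assume "x \<in> {c<..<d}"
    have "AE \<omega> in Q. False" using avoid solves_MP_AE_start[OF MP]
      by eventually_elim (use \<open>x \<in> {c<..<d}\<close> in force)
    then show False by (simp add: AE_False)
  qed
  then obtain f where f: "test_fun (open_ivl \<alpha> \<beta>) f" "continuous_on (open_ivl \<alpha> \<beta>) (gen b \<sigma> f)"
    "0 < f x" "\<And>y. y \<notin> {c<..<d} \<Longrightarrow> 0 \<le> f y \<and> f y \<le> gen b \<sigma> f y"
    using exists_barrier_outside_interval[OF b \<sigma> \<sigma>_pos x _ cd] by blast
  have "AE \<omega> in Q. \<forall>s\<ge>0. 0 \<le> f (\<omega> s) \<and> 1 * f (\<omega> s) \<le> gen b \<sigma> f (\<omega> s)"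
    using avoid by eventually_elim (simp add: f(4))
  with solves_MP_not_AE_gen_dominates[OF MP f(1,2) zero_less_one f(3)] show False by simp
qed

section \<open>The value function\<close>

lemma exists_interval_where_gt:
  fixes R :: "real \<Rightarrow> real"
  assumes "open S" "continuous_on S R" "y \<in> S" "\<epsilon> < R y"
  obtains c d where "c < d" "{c..d} \<subseteq> S" "\<And>z. z \<in> {c..d} \<Longrightarrow> \<epsilon> < R z"
proof -
  have "open (R -` {\<epsilon><..} \<inter> S)"
    using continuous_on_open_vimage[OF assms(1)] assms(2) open_greaterThan by blast
  moreover have "y \<in> R -` {\<epsilon><..} \<inter> S" using assms(3,4) by simp
  ultimately obtain e where "0 < e" "cball y e \<subseteq> R -` {\<epsilon><..} \<inter> S"
    by (meson open_contains_cball)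
  then show ?thesis by (intro that[of "y - e" "y + e"]) (auto simp: cball_eq_atLeastAtMost)
qed

lemma gen_eq_0_if_vanishing_on_open:
  assumes "open S" "z \<in> S" "\<And>y. y \<in> S \<Longrightarrow> u y = 0"
  shows "gen b \<sigma> u z = 0"
proof -
  have "deriv u y = 0" if "y \<in> S" for y
    using assms(3) by (intro DERIV_imp_deriv has_field_derivative_transform_within_open[OF DERIV_const
        assms(1) that]) auto
  then have "deriv (deriv u) z = 0"
    by (intro DERIV_imp_deriv has_field_derivative_transform_within_open[OF DERIV_const assms(1,2)]) auto
  with \<open>z \<in> S\<close> \<open>\<And>y. y \<in> S \<Longrightarrow> deriv u y = 0\<close> show ?thesis by (simp add: gen_def)
qed

lemma abs_disc_payoff_le_SUP:
  "ennreal \<bar>disc_payoff r R \<tau> \<omega>\<bar> \<le> (SUP t\<in>{0..}. ennreal (exp (- r * t) * \<bar>R (\<omega> t)\<bar>))"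
proof (cases "\<tau> \<omega> = \<infinity>")
  case False
  then have "ennreal \<bar>disc_payoff r R \<tau> \<omega>\<bar>
      = ennreal (exp (- r * enn2real (\<tau> \<omega>)) * \<bar>R (\<omega> (enn2real (\<tau> \<omega>)))\<bar>)"
    by (simp add: disc_payoff_def abs_mult)
  also have "\<dots> \<le> (SUP t\<in>{0..}. ennreal (exp (- r * t) * \<bar>R (\<omega> t)\<bar>))"
    by (rule SUP_upper) simp
  finally show ?thesis .
qed (simp add: disc_payoff_def)

lemma integral_disc_payoff_le:
  assumes fin: "(\<integral>\<^sup>+ \<omega>. (SUP t\<in>{0..}. ennreal (exp (- r * t) * \<bar>R (\<omega> t)\<bar>)) \<partial>M) < \<infinity>"
  shows "integral\<^sup>L (completion M) (disc_payoff r R \<tau>)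
    \<le> enn2real (\<integral>\<^sup>+ \<omega>. (SUP t\<in>{0..}. ennreal (exp (- r * t) * \<bar>R (\<omega> t)\<bar>)) \<partial>M)"
    (is "?I \<le> enn2real ?D")
proof (cases "integrable (completion M) (disc_payoff r R \<tau>)")
  case True
  have "ennreal (norm ?I) \<le> (\<integral>\<^sup>+ \<omega>. norm (disc_payoff r R \<tau> \<omega>) \<partial>completion M)"
    using integral_norm_bound_ennreal[OF True] by simp
  also have "\<dots> \<le> (\<integral>\<^sup>+ \<omega>. (SUP t\<in>{0..}. ennreal (exp (- r * t) * \<bar>R (\<omega> t)\<bar>)) \<partial>completion M)"
    by (intro nn_integral_mono) (use abs_disc_payoff_le_SUP in simp)
  also have "\<dots> = ?D" by (rule nn_integral_completion)
  finally have "enn2real (ennreal (norm ?I)) \<le> enn2real ?D"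
    using fin by (intro enn2real_mono) auto
  then show ?thesis by simp
qed (simp add: not_integrable_integral_eq)

lemma value_fn_ge_integral:
  assumes A1: "(\<integral>\<^sup>+ \<omega>. (SUP t\<in>{0..}. ennreal (exp (- r * t) * \<bar>R (\<omega> t)\<bar>)) \<partial>P x) < \<infinity>"
    and "\<tau> \<in> stop_times (paths \<alpha> \<beta>) P (open_ivl \<alpha> \<beta>)"
  shows "integral\<^sup>L (completion (P x)) (disc_payoff r R \<tau>) \<le> value_fn \<alpha> \<beta> P r R x"
  unfolding value_fn_def
  by (rule cSUP_upper[OF assms(2)], rule bdd_aboveI2, rule integral_disc_payoff_le[OF A1])

lemma value_fn_nonneg:
  assumes "(\<integral>\<^sup>+ \<omega>. (SUP t\<in>{0..}. ennreal (exp (- r * t) * \<bar>R (\<omega> t)\<bar>)) \<partial>P x) < \<infinity>"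
  shows "0 \<le> value_fn \<alpha> \<beta> P r R x"
  using value_fn_ge_integral[OF assms never_in_stop_times[of "paths \<alpha> \<beta>" P "open_ivl \<alpha> \<beta>"]]
  by (simp add: disc_payoff_def [abs_def])

lemma value_fn_nonpos:
  assumes "sets (P x) = sets (canon (paths \<alpha> \<beta>))" and R: "\<forall>y\<in>open_ivl \<alpha> \<beta>. R y \<le> 0"
  shows "value_fn \<alpha> \<beta> P r R x \<le> 0"
  unfolding value_fn_def
proof (rule cSUP_least)
  show "stop_times (paths \<alpha> \<beta>) P (open_ivl \<alpha> \<beta>) \<noteq> {}" using never_in_stop_times by blast
  fix \<tau>
  have "space (completion (P x)) = paths \<alpha> \<beta>" using sets_eq_imp_space_eq[OF assms(1)] by simp
  then have "0 \<le> - disc_payoff r R \<tau> \<omega>" if "\<omega> \<in> space (completion (P x))" for \<omega>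
    using that R by (auto simp: disc_payoff_def paths_def intro!: mult_nonneg_nonpos)
  then have "0 \<le> integral\<^sup>L (completion (P x)) (\<lambda>\<omega>. - disc_payoff r R \<tau> \<omega>)"
    by (intro integral_nonneg_AE AE_I2)
  then show "integral\<^sup>L (completion (P x)) (disc_payoff r R \<tau>) \<le> 0" by simp
qed

lemma integral_disc_payoff_stop_at_ge:
  assumes Q: "prob_space Q" "sets Q = sets (canon (paths \<alpha> \<beta>))" and "0 \<le> t"
    and R: "continuous_on {c..d} R" "\<And>y. y \<in> {c<..<d} \<Longrightarrow> \<epsilon> \<le> R y"
  defines "A \<equiv> {\<omega> \<in> paths \<alpha> \<beta>. \<omega> t \<in> {c<..<d}}"
  shows "exp (- r * t) * \<epsilon> * measure Q A
    \<le> integral\<^sup>L (completion Q) (disc_payoff r R (\<lambda>\<omega>. if \<omega> \<in> A then ennreal t else \<infinity>))"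
proof -
  interpret prob_space Q by (rule Q(1))
  have space: "space Q = paths \<alpha> \<beta>" using sets_eq_imp_space_eq[OF Q(2)] by simp
  define g where "g \<omega> = exp (- r * t) * (indicator {c<..<d} (\<omega> t) *\<^sub>R R (\<omega> t))" for \<omega> :: "real \<Rightarrow> real"
  have "(\<lambda>y. indicator {c<..<d} y *\<^sub>R R y) \<in> borel_measurable borel"
    by (rule borel_measurable_continuous_on_indicator) (auto intro: continuous_on_subset[OF R(1)])
  then have "(\<lambda>\<omega>. indicator {c<..<d} (\<omega> t) *\<^sub>R R (\<omega> t)) \<in> borel_measurable Q"
    by (rule measurable_compose[OF measurable_eval_canon[OF Q(2) \<open>0 \<le> t\<close>]])
  then have g_meas: "g \<in> borel_measurable Q"
    unfolding g_def by (rule borel_measurable_times[OF borel_measurable_const])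
  obtain M where M: "\<forall>y\<in>{c..d}. \<bar>R y\<bar> \<le> M"
    using compact_imp_bounded[OF compact_continuous_image[OF R(1)]] unfolding bounded_iff by auto
  have "integrable Q g"
    using g_meas M by (intro integrable_const_bound[where B = "exp (- r * t) * max M 0"])
      (auto simp: g_def abs_mult indicator_def le_max_iff_disj intro!: AE_I2 mult_left_mono)
  have A: "A \<in> sets Q"
    using eval_preimage_in_nat_filt[of t t "{c<..<d}" "paths \<alpha> \<beta>"] \<open>0 \<le> t\<close>
      sets_nat_filt_subset_canon[of "paths \<alpha> \<beta>" t] Q(2) by (auto simp: A_def)
  have "exp (- r * t) * \<epsilon> * measure Q A = (\<integral>\<omega>. exp (- r * t) * \<epsilon> * indicator A \<omega> \<partial>Q)"
    using A by simp
  also have "\<dots> \<le> (\<integral>\<omega>. g \<omega> \<partial>Q)"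
  proof (rule integral_mono[OF _ \<open>integrable Q g\<close>])
    show "integrable Q (\<lambda>\<omega>. exp (- r * t) * \<epsilon> * indicator A \<omega>)"
      using A by (intro integrable_mult_right integrable_real_indicator) (auto simp: less_top[symmetric])
  qed (use R(2) space in \<open>auto simp: g_def A_def indicator_def\<close>)
  also have "\<dots> = integral\<^sup>L (completion Q) g" by (rule integral_completion[OF g_meas, symmetric])
  also have "\<dots> = integral\<^sup>L (completion Q) (disc_payoff r R (\<lambda>\<omega>. if \<omega> \<in> A then ennreal t else \<infinity>))"
    using space \<open>0 \<le> t\<close> by (intro Bochner_Integration.integral_cong) (auto simp: g_def A_def disc_payoff_def)
  finally show ?thesis .
qed

lemma value_fn_pos:
  assumes MP: "solves_MP \<alpha> \<beta> b \<sigma> x (P x)"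
    and b: "continuous_on (open_ivl \<alpha> \<beta>) b" and \<sigma>: "continuous_on (open_ivl \<alpha> \<beta>) \<sigma>"
    and \<sigma>_pos: "\<forall>y\<in>open_ivl \<alpha> \<beta>. 0 < \<sigma> y"
    and x: "x \<in> open_ivl \<alpha> \<beta>"
    and A1: "(\<integral>\<^sup>+ \<omega>. (SUP t\<in>{0..}. ennreal (exp (- r * t) * \<bar>R (\<omega> t)\<bar>)) \<partial>P x) < \<infinity>"
    and R: "continuous_on (open_ivl \<alpha> \<beta>) R" and y: "y \<in> open_ivl \<alpha> \<beta>" "0 < R y"
  shows "0 < value_fn \<alpha> \<beta> P r R x"
proof -
  obtain c d where cd: "c < d" "{c..d} \<subseteq> open_ivl \<alpha> \<beta>" and Rcd: "\<And>z. z \<in> {c..d} \<Longrightarrow> R y / 2 < R z"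
    using exists_interval_where_gt[OF open_open_ivl R y(1), of "R y / 2"] y(2) by auto
  have "c \<in> open_ivl \<alpha> \<beta>" "d \<in> open_ivl \<alpha> \<beta>" using cd by auto
  then obtain t where "0 \<le> t" and reach: "0 < measure (P x) {\<omega> \<in> paths \<alpha> \<beta>. \<omega> t \<in> {c<..<d}}"
    using solves_MP_reaches_interval[OF MP b \<sigma> \<sigma>_pos x _ _ cd(1)] by auto
  let ?A = "{\<omega> \<in> paths \<alpha> \<beta>. \<omega> t \<in> {c<..<d}}"
  have "?A \<in> sets (nat_filt (paths \<alpha> \<beta>) t)"
    using eval_preimage_in_nat_filt[of t t "{c<..<d}"] \<open>0 \<le> t\<close> by auto
  then have stop: "(\<lambda>\<omega>. if \<omega> \<in> ?A then ennreal t else \<infinity>) \<in> stop_times (paths \<alpha> \<beta>) P (open_ivl \<alpha> \<beta>)"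
    by (rule stop_at_in_stop_times[OF \<open>0 \<le> t\<close>])
  have "0 < exp (- r * t) * (R y / 2) * measure (P x) ?A"
    using reach y(2) by simp
  also have "\<dots> \<le> integral\<^sup>L (completion (P x)) (disc_payoff r R (\<lambda>\<omega>. if \<omega> \<in> ?A then ennreal t else \<infinity>))"
    using Rcd by (intro integral_disc_payoff_stop_at_ge[OF solves_MP_prob_space[OF MP]
        sets_solves_MP[OF MP] \<open>0 \<le> t\<close> continuous_on_subset[OF R cd(2)]]) (auto intro: less_imp_le)
  also have "\<dots> \<le> value_fn \<alpha> \<beta> P r R x"
    by (rule value_fn_ge_integral[where P = P and x = x, OF A1 stop])
  finally show ?thesis .
qed

lemma exists_pos_payoff:
  assumes P: "\<forall>x\<in>open_ivl \<alpha> \<beta>. sets (P x) = sets (canon (paths \<alpha> \<beta>))"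
    and A1: "\<forall>x\<in>open_ivl \<alpha> \<beta>.
               (\<integral>\<^sup>+ \<omega>. (SUP t\<in>{0..}. ennreal (exp (- r * t) * \<bar>R (\<omega> t)\<bar>)) \<partial>P x) < \<infinity>"
    and x0: "x0 \<in> open_ivl \<alpha> \<beta>" "\<forall>x\<in>open_ivl \<alpha> \<beta>. x < x0 \<longrightarrow> gen b \<sigma> R x - r * R x < 0"
    and xR: "xR \<in> open_ivl \<alpha> \<beta>"
      "{x \<in> open_ivl \<alpha> \<beta>. value_fn \<alpha> \<beta> P r R x = R x} = {x \<in> open_ivl \<alpha> \<beta>. x \<le> xR}"
  shows "\<exists>y\<in>open_ivl \<alpha> \<beta>. 0 < R y"
proof (rule ccontr)
  assume "\<not> ?thesis"
  then have "\<forall>y\<in>open_ivl \<alpha> \<beta>. R y \<le> 0" by (simp add: not_less)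
  then have V0: "value_fn \<alpha> \<beta> P r R x = 0" if "x \<in> open_ivl \<alpha> \<beta>" for x
    using value_fn_nonpos[where P = P and x = x, OF P[rule_format, OF that]]
      value_fn_nonneg[where P = P and x = x, OF A1[rule_format, OF that]]
    by (simp add: order_antisym)
  have R0: "R y = 0" if "y \<in> open_ivl \<alpha> \<beta>" "y \<le> xR" for y
  proof -
    have "y \<in> {x \<in> open_ivl \<alpha> \<beta>. value_fn \<alpha> \<beta> P r R x = R x}" using xR(2) that by blast
    with V0[OF that(1)] show ?thesis by simp
  qed
  have "min xR x0 \<in> open_ivl \<alpha> \<beta>" using xR(1) x0(1) by (simp add: min_def)
  then obtain z where z: "z \<in> open_ivl \<alpha> \<beta>" "z < min xR x0" by (rule open_ivl_below)
  obtain lo where lo: "lo \<in> open_ivl \<alpha> \<beta>" "lo < z" using open_ivl_below[OF z(1)] .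
  have "gen b \<sigma> R z = 0"
    using R0 atLeastAtMost_subset_open_ivl[OF lo(1) xR(1)] lo z
    by (intro gen_eq_0_if_vanishing_on_open[of "{lo<..<xR}"]) (auto simp: subset_iff)
  then show False using x0(2) z R0 by force
qed

theorem lemma1:
  fixes \<alpha> \<beta> :: ereal and b \<sigma> R :: "real \<Rightarrow> real" and r xR :: real
    and P :: "real \<Rightarrow> (real \<Rightarrow> real) measure"
  assumes ab: "\<alpha> < \<beta>"
    and b_cont: "continuous_on (open_ivl \<alpha> \<beta>) b"
    and sigma_cont: "continuous_on (open_ivl \<alpha> \<beta>) \<sigma>"
    and sigma_pos: "\<forall>x\<in>open_ivl \<alpha> \<beta>. \<sigma> x > 0"
    and natural: "natural_endpoints \<alpha> \<beta> b \<sigma>"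
    and P_sol: "\<forall>x\<in>open_ivl \<alpha> \<beta>. solves_MP \<alpha> \<beta> b \<sigma> x (P x)"
    and P_unique: "\<forall>x\<in>open_ivl \<alpha> \<beta>. \<forall>Q. solves_MP \<alpha> \<beta> b \<sigma> x Q \<longrightarrow> Q = P x"
    and r_pos: "r > 0"
    and R_C2: "C2_on (open_ivl \<alpha> \<beta>) R"
    and A1: "\<forall>x\<in>open_ivl \<alpha> \<beta>.
               (\<integral>\<^sup>+ \<omega>. (SUP t\<in>{0..}. ennreal (exp (- r * t) * \<bar>R (\<omega> t)\<bar>)) \<partial>P x) < \<infinity>"
    and A2: "\<forall>x\<in>open_ivl \<alpha> \<beta>. AE \<omega> in P x. ((\<lambda>t. exp (- r * t) * R (\<omega> t)) \<longlongrightarrow> 0) at_top"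
    and A3: "\<exists>x0\<in>open_ivl \<alpha> \<beta>. (\<forall>x\<in>open_ivl \<alpha> \<beta>. x < x0 \<longrightarrow> gen b \<sigma> R x - r * R x < 0)
                                  \<and> (\<forall>x\<in>open_ivl \<alpha> \<beta>. x > x0 \<longrightarrow> gen b \<sigma> R x - r * R x > 0)"
    and xR_in: "xR \<in> open_ivl \<alpha> \<beta>"
    and xR_thr: "{x \<in> open_ivl \<alpha> \<beta>. value_fn \<alpha> \<beta> P r R x = R x} = {x \<in> open_ivl \<alpha> \<beta>. x \<le> xR}"
  shows "(\<forall>x\<in>open_ivl \<alpha> \<beta>. value_fn \<alpha> \<beta> P r R x > 0) \<and> (\<forall>x\<in>open_ivl \<alpha> \<beta>. x \<le> xR \<longrightarrow> R x > 0)"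
proof -
  have MP: "solves_MP \<alpha> \<beta> b \<sigma> x (P x)" if "x \<in> open_ivl \<alpha> \<beta>" for x
    using P_sol that by blast
  have R_cont: "continuous_on (open_ivl \<alpha> \<beta>) R"
    using R_C2 unfolding C2_on_def by (meson DERIV_isCont continuous_at_imp_continuous_on)
  obtain x0 where x0: "x0 \<in> open_ivl \<alpha> \<beta>" "\<forall>x\<in>open_ivl \<alpha> \<beta>. x < x0 \<longrightarrow> gen b \<sigma> R x - r * R x < 0"
    using A3 by blast
  have "\<forall>x\<in>open_ivl \<alpha> \<beta>. sets (P x) = sets (canon (paths \<alpha> \<beta>))"
    using sets_solves_MP[OF MP] by blast
  then obtain y where y: "y \<in> open_ivl \<alpha> \<beta>" "0 < R y"
    using exists_pos_payoff[OF _ A1 x0 xR_in xR_thr] by blast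
  have V_pos: "0 < value_fn \<alpha> \<beta> P r R x" if "x \<in> open_ivl \<alpha> \<beta>" for x
    using value_fn_pos[where P = P and x = x, OF MP[OF that] b_cont sigma_cont sigma_pos that
        A1[rule_format, OF that] R_cont y] .
  have "value_fn \<alpha> \<beta> P r R x = R x" if "x \<in> open_ivl \<alpha> \<beta>" "x \<le> xR" for x
    using xR_thr that by blast
  with V_pos show ?thesis by (metis (no_types))
qed

end
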